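(* Let $\epsilon\in\mathbb{Z}_2^*$, $\lambda\in\mathcal{O}_D$ and $t\ge2$ an integer. If $r\in\mathcal{O}_D$ satisfies $j+ij=r(j+ij)\bar r+\epsilon2^t\lambda(j+ij)\bar\lambda$, or satisfies $i+j=r(i+j)\bar r+\epsilon2^t\lambda(i+j)\bar\lambda$, then $1-r\in i\mathcal{O}_D$.
   Context: $D=\left(\frac{2,5}{\mathbb{Q}_2}\right)$ is the quaternion division algebra over $\mathbb{Q}_2$ with basis $1,i,j,ij$, $i^2=2$, $j^2=5$, $ij=-ji$; $q\mapsto\bar q$ is the canonical involution and $\mathcal{O}_D$ the maximal order (equal to $\mathbb{Z}_2\oplus\mathbb{Z}_2\omega\oplus\mathbb{Z}_2i\oplus\mathbb{Z}_2i\omega$, $\omega=(1+j)/2$). *)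

theory Defs
  imports Main
begin

text \<open>An element of Z_2 is a compatible sequence (x n) with x n in {0..<2^n} and
  x n = x (Suc n) mod 2^n; this is the standard model  Z_2 = lim Z/2^n Z.\<close>

typedef padic2 = "{x :: nat \<Rightarrow> int. \<forall>n. x n = x (Suc n) mod 2 ^ n}"
  morphisms seq Padic2
  by (rule exI[of _ "\<lambda>_. 0"]) simp

setup_lifting type_definition_padic2

lemma compat_mod:
  fixes x :: "nat \<Rightarrow> int"
  assumes "\<forall>n. x n = x (Suc n) mod 2 ^ n"
  shows "x n = x n mod 2 ^ n"
proof -
  have "x n = x (Suc n) mod 2 ^ n" using assms by blast
  then show ?thesis by simp
qed

lemma compat_op:
  fixes x :: "nat \<Rightarrow> int"
  assumes "\<forall>n. x n = x (Suc n) mod 2 ^ n"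
  shows "x (Suc n) mod 2 ^ n = x n"
  using assms by metis

lemma pow2_dvd_Suc: "(2::int) ^ n dvd 2 ^ Suc n" by simp

lemma closed_plus:
  fixes x y :: "nat \<Rightarrow> int"
  assumes x: "\<forall>n. x n = x (Suc n) mod 2 ^ n" and y: "\<forall>n. y n = y (Suc n) mod 2 ^ n"
  shows "\<forall>n. (x n + y n) mod 2 ^ n = (x (Suc n) + y (Suc n)) mod 2 ^ Suc n mod 2 ^ n"
proof
  fix n
  have "(x (Suc n) + y (Suc n)) mod 2 ^ Suc n mod 2 ^ n = (x (Suc n) + y (Suc n)) mod 2 ^ n"
    by (simp add: mod_mod_cancel)
  also have "\<dots> = (x (Suc n) mod 2^n + y (Suc n) mod 2^n) mod 2 ^ n"
    by (simp add: mod_simps)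
  also have "\<dots> = (x n + y n) mod 2 ^ n" using x y by metis
  finally show "(x n + y n) mod 2 ^ n = (x (Suc n) + y (Suc n)) mod 2 ^ Suc n mod 2 ^ n" by simp
qed

lemma closed_uminus:
  fixes x :: "nat \<Rightarrow> int"
  assumes x: "\<forall>n. x n = x (Suc n) mod 2 ^ n"
  shows "\<forall>n. (- x n) mod 2 ^ n = (- x (Suc n)) mod 2 ^ Suc n mod 2 ^ n"
proof
  fix n
  have "(- x (Suc n)) mod 2 ^ Suc n mod 2 ^ n = (- x (Suc n)) mod 2 ^ n"
    by (simp add: mod_mod_cancel)
  also have "\<dots> = (- (x (Suc n) mod 2^n)) mod 2 ^ n"
    by (simp add: mod_simps)
  also have "\<dots> = (- x n) mod 2 ^ n" using x by metis
  finally show "(- x n) mod 2 ^ n = (- x (Suc n)) mod 2 ^ Suc n mod 2 ^ n" by simp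
qed

lemma closed_times:
  fixes x y :: "nat \<Rightarrow> int"
  assumes x: "\<forall>n. x n = x (Suc n) mod 2 ^ n" and y: "\<forall>n. y n = y (Suc n) mod 2 ^ n"
  shows "\<forall>n. (x n * y n) mod 2 ^ n = (x (Suc n) * y (Suc n)) mod 2 ^ Suc n mod 2 ^ n"
proof
  fix n
  have "(x (Suc n) * y (Suc n)) mod 2 ^ Suc n mod 2 ^ n = (x (Suc n) * y (Suc n)) mod 2 ^ n"
    by (simp add: mod_mod_cancel)
  also have "\<dots> = (x (Suc n) mod 2^n * (y (Suc n) mod 2^n)) mod 2 ^ n"
    by (simp add: mod_simps)
  also have "\<dots> = (x n * y n) mod 2 ^ n" using x y by metis
  finally show "(x n * y n) mod 2 ^ n = (x (Suc n) * y (Suc n)) mod 2 ^ Suc n mod 2 ^ n" by simp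
qed

lemma padic_aux1: "((a*b) mod m * c) mod m = (a * ((b*c) mod m)) mod (m::int)"
  by (simp add: mod_mult_left_eq mod_mult_right_eq mult.assoc)
lemma padic_aux2: "((a+b) mod m + c) mod m = (a + ((b+c) mod m)) mod (m::int)"
  by (simp add: mod_add_left_eq mod_add_right_eq add.assoc)
lemma padic_aux3: "((- a) mod m + a) mod m = (0::int)"
  by (simp add: mod_add_left_eq)
lemma padic_aux4: "((a+b) mod m * c) mod m = ((a*c) mod m + (b*c) mod m) mod (m::int)"
  by (simp add: mod_mult_left_eq mod_add_eq distrib_right)
lemma padic_aux5: "((1 mod m) * a) mod m = a mod (m::int)"
  by (simp add: mod_mult_left_eq)

instantiation padic2 :: comm_ring_1
begin

lift_definition zero_padic2 :: padic2 is "\<lambda>_. 0" by simp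
lift_definition one_padic2 :: padic2 is "\<lambda>n. 1 mod 2 ^ n"
  by (simp add: mod_mod_cancel)
lift_definition plus_padic2 :: "padic2 \<Rightarrow> padic2 \<Rightarrow> padic2"
  is "\<lambda>x y n. (x n + y n) mod 2 ^ n" using closed_plus by blast
lift_definition uminus_padic2 :: "padic2 \<Rightarrow> padic2"
  is "\<lambda>x n. (- x n) mod 2 ^ n" using closed_uminus by blast
lift_definition times_padic2 :: "padic2 \<Rightarrow> padic2 \<Rightarrow> padic2"
  is "\<lambda>x y n. (x n * y n) mod 2 ^ n" using closed_times by blast
definition minus_padic2 :: "padic2 \<Rightarrow> padic2 \<Rightarrow> padic2" where
  "minus_padic2 x y = x + - y"

instance
proof
  fix a b c :: padic2
  show "a * b * c = a * (b * c)"
    by transfer (simp (no_asm) add: fun_eq_iff padic_aux1)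
  show "a * b = b * a"
    by transfer (simp (no_asm) add: fun_eq_iff mult.commute)
  show "1 * a = a"
  proof transfer
    fix x :: "nat \<Rightarrow> int"
    assume x: "\<forall>n. x n = x (Suc n) mod 2 ^ n"
    show "(\<lambda>n. 1 mod 2 ^ n * x n mod 2 ^ n) = x"
    proof
      fix n
      have "x n mod 2 ^ n = x n" using compat_mod[OF x, of n] by simp
      then show "1 mod 2 ^ n * x n mod 2 ^ n = x n" using padic_aux5[of "2 ^ n" "x n"] by (simp only:)
    qed
  qed
  show "a + b + c = a + (b + c)"
    by transfer (simp (no_asm) add: fun_eq_iff padic_aux2)
  show "a + b = b + a"
    by transfer (simp (no_asm) add: fun_eq_iff add.commute)
  show "0 + a = a"
  proof transfer
    fix x :: "nat \<Rightarrow> int"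
    assume x: "\<forall>n. x n = x (Suc n) mod 2 ^ n"
    show "(\<lambda>n. (0 + x n) mod 2 ^ n) = x"
    proof
      fix n
      have "x n mod 2 ^ n = x n" using compat_mod[OF x, of n] by simp
      then show "(0 + x n) mod 2 ^ n = x n" by (simp only: add_0_left)
    qed
  qed
  show "- a + a = 0"
    by transfer (simp (no_asm) add: fun_eq_iff padic_aux3)
  show "a - b = a + - b"
    by (simp add: minus_padic2_def)
  show "(a + b) * c = a * c + b * c"
    by transfer (simp (no_asm) add: fun_eq_iff padic_aux4)
  show "(0::padic2) \<noteq> 1"
  proof transfer
    have "(\<lambda>_. 0::int) 1 \<noteq> (\<lambda>n. 1 mod 2 ^ n) (1::nat)" by simp
    then show "(\<lambda>_. 0::int) \<noteq> (\<lambda>n. 1 mod 2 ^ n)" by metis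
  qed
qed
end

text \<open>O_D = Z_2 + Z_2 \<omega> + Z_2 i + Z_2 i\<omega>, \<omega> = (1+j)/2, with \<omega>^2 = \<omega> + 1, i^2 = 2,
  i y = \<sigma>(y) i for y in Z_2[\<omega>], where \<sigma>(a + b\<omega>) = (a+b) - b\<omega>.
  The element  OD a b c d  stands for  a + b\<omega> + c i + d i\<omega> = (a + b\<omega>) + i (c + d\<omega>).\<close>

datatype OD = OD (c1: padic2) (cw: padic2) (ci: padic2) (ciw: padic2)

text \<open>For x = x1 + i x2, y = y1 + i y2:  x y = (x1 y1 + 2 \<sigma>(x2) y2) + i(\<sigma>(x1) y2 + x2 y1).\<close>

definition wmul :: "padic2 \<times> padic2 \<Rightarrow> padic2 \<times> padic2 \<Rightarrow> padic2 \<times> padic2" where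
  "wmul p q = (case p of (a, b) \<Rightarrow> case q of (c, d) \<Rightarrow> (a*c + b*d, a*d + b*c + b*d))"

definition wsig :: "padic2 \<times> padic2 \<Rightarrow> padic2 \<times> padic2" where
  "wsig p = (case p of (a, b) \<Rightarrow> (a + b, - b))"

instantiation OD :: "{zero, one, plus, minus, uminus, times}"
begin
definition "0 = OD 0 0 0 0"
definition "1 = OD 1 0 0 0"
definition "x + y = OD (c1 x + c1 y) (cw x + cw y) (ci x + ci y) (ciw x + ciw y)"
definition "x - y = OD (c1 x - c1 y) (cw x - cw y) (ci x - ci y) (ciw x - ciw y)"
definition "- x = OD (- c1 x) (- cw x) (- ci x) (- ciw x)"
definition "x * y =
  (let x1 = (c1 x, cw x); x2 = (ci x, ciw x); y1 = (c1 y, cw y); y2 = (ci y, ciw y);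
       p = wmul x1 y1; q = wmul (wsig x2) y2;
       u = wmul (wsig x1) y2; v = wmul x2 y1
   in OD (fst p + 2 * fst q) (snd p + 2 * snd q) (fst u + fst v) (snd u + snd v))"
instance ..
end

definition scal :: "padic2 \<Rightarrow> OD" where "scal a = OD a 0 0 0"

definition qi :: OD where "qi = OD 0 0 1 0"
definition qomega :: OD where "qomega = OD 0 1 0 0"
definition qj :: OD where "qj = OD (-1) 2 0 0"       (* j = 2\<omega> - 1 *)

definition qconj :: "OD \<Rightarrow> OD" where
  "qconj x = OD (c1 x + cw x) (- cw x) (- ci x) (- ciw x)"

definition unit2 :: "padic2 \<Rightarrow> bool" where "unit2 e \<longleftrightarrow> (\<exists>d. e * d = 1)"

end

theory Submission imports Defs "HOL-Library.Numeral_Type" begin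

text \<open>Reduce everything modulo 2. Since 2 divides \<open>\<epsilon>2^t\<close>, the equation becomes
  \<open>T \<equiv> r T conj(r) (mod 2 O_D)\<close>, where both \<open>T = j + ij\<close> and \<open>T = i + j\<close> are congruent to \<open>1 + i\<close>.
  Writing \<open>r \<equiv> a + b\<omega> + c i + d i\<omega>\<close> over \<open>F_2\<close>, a finite check shows that this forces
  \<open>a = 1\<close> and \<open>b = 0\<close>, i.e. \<open>1 - r \<in> 2 Z_2[\<omega>] + i Z_2[\<omega>] = i O_D\<close> because \<open>2 = i\<^sup>2\<close>.\<close>

definition res2 :: "padic2 \<Rightarrow> 2" where
  "res2 x = of_int (seq x 1)"

lemma of_int_mod_2: "(of_int (z mod 2) :: 2) = of_int z"
  by (simp add: bit0.of_int_eq)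

lemma res2_add [simp]: "res2 (x + y) = res2 x + res2 y"
  unfolding res2_def by (simp only: plus_padic2.rep_eq power_one_right of_int_mod_2 of_int_add)

lemma res2_mult [simp]: "res2 (x * y) = res2 x * res2 y"
  unfolding res2_def by (simp only: times_padic2.rep_eq power_one_right of_int_mod_2 of_int_mult)

lemma res2_uminus [simp]: "res2 (- x) = - res2 x"
  unfolding res2_def by (simp only: uminus_padic2.rep_eq power_one_right of_int_mod_2 of_int_minus)

lemma res2_diff [simp]: "res2 (x - y) = res2 x - res2 y"
  by (simp only: minus_padic2_def res2_add res2_uminus diff_conv_add_uminus)

lemma res2_0 [simp]: "res2 0 = 0"
  unfolding res2_def by (simp only: zero_padic2.rep_eq of_int_0)

lemma res2_1 [simp]: "res2 1 = 1"
  unfolding res2_def by (simp only: one_padic2.rep_eq power_one_right of_int_mod_2 of_int_1)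

lemma res2_power [simp]: "res2 (x ^ n) = res2 x ^ n"
  by (induct n) auto

lemma res2_of_nat [simp]: "res2 (of_nat n) = of_nat n"
  by (induct n) auto

lemma res2_numeral [simp]: "res2 (numeral w) = numeral w"
  using res2_of_nat[of "numeral w"] by simp

lemma two_eq_zero_mod_2 [simp]: "(2::2) = 0"
  by simp

lemma mod_2_cases: "(x::2) = 0 \<or> x = 1"
proof (cases x)
  case (of_int z)
  have "z mod 2 = 0 \<or> z mod 2 = 1" by arith
  moreover have "x = of_int (z mod 2)" using of_int of_int_mod_2 by metis
  ultimately show ?thesis by (metis of_int_0 of_int_1)
qed

lemma all_mod_2: "(\<forall>x::2. P x) \<longleftrightarrow> P 0 \<and> P 1"
  using mod_2_cases by metis

lemma seq_mod_pow2: "seq x (n + k) mod 2 ^ n = seq x n"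
proof (induct k)
  case 0
  show ?case using compat_mod[OF seq[simplified], of x n] by simp
next
  case (Suc k)
  have "(2::int) ^ n dvd 2 ^ (n + k)" by (rule le_imp_power_dvd) simp
  then have "seq x (n + Suc k) mod 2 ^ n = seq x (Suc (n + k)) mod 2 ^ (n + k) mod 2 ^ n"
    by (simp add: mod_mod_cancel)
  also have "\<dots> = seq x (n + k) mod 2 ^ n"
    using compat_op[OF seq[simplified], of x "n + k"] by simp
  finally show ?case using Suc by simp
qed

text \<open>The half of \<open>x\<close> is the sequence \<open>n \<mapsto> x\<^sub>n\<^sub>+\<^sub>1 / 2\<close>, whose entries are integers once \<open>x\<^sub>1 = 0\<close>.\<close>

lemma res2_eq_0_imp_even:
  assumes "res2 x = 0"
  shows "\<exists>y. x = 2 * y"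
proof -
  have "(of_int (seq x 1) :: 2) = 0" using assms by (simp add: res2_def)
  then have "2 dvd seq x 1" by (simp only: of_int_eq_0_iff_char_dvd) simp
  moreover have "seq x 1 mod 2 = seq x 1" using seq_mod_pow2[of x 1 0] by simp
  ultimately have "seq x 1 = 0" by simp
  then have even: "seq x (Suc n) mod 2 = 0" for n using seq_mod_pow2[of x 1 n] by simp
  define h where "h = (\<lambda>n. seq x (Suc n) div 2)"
  have h_compat: "\<forall>n. h n = h (Suc n) mod 2 ^ n"
  proof
    fix n
    let ?z = "seq x (Suc (Suc n))"
    have "?z mod (2 * 2 ^ n) = 2 * (?z div 2 mod 2 ^ n) + ?z mod 2"
      by (rule zmod_zmult2_eq) simp
    moreover have "?z mod 2 ^ Suc n = seq x (Suc n)" using seq_mod_pow2[of x "Suc n" 1] by simp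
    ultimately have "seq x (Suc n) = 2 * (?z div 2 mod 2 ^ n)" using even[of "Suc n"] by simp
    then show "h n = h (Suc n) mod 2 ^ n" unfolding h_def by simp
  qed
  have seq_h: "seq (Padic2 h) = h"
    by (rule Padic2_inverse) (simp only: mem_Collect_eq, rule h_compat)
  have "x = Padic2 h + Padic2 h"
  proof (rule seq_inject[THEN iffD1], rule ext)
    fix n
    have "seq (Padic2 h + Padic2 h) n = (h n + h n) mod 2 ^ n"
      by (simp only: plus_padic2.rep_eq seq_h)
    also have "\<dots> = seq x (Suc n) mod 2 ^ n"
      unfolding h_def using even[of n]
      by (metis add.commute dvd_mult_div_cancel mod_0_imp_dvd mult_2)
    also have "\<dots> = seq x n" using seq_mod_pow2[of x n 1] by simp
    finally show "seq x n = seq (Padic2 h + Padic2 h) n" by simp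
  qed
  then show ?thesis by (metis mult_2)
qed

text \<open>The residue ring \<open>O_D / 2 O_D\<close>, with the arithmetic of \<open>O_D\<close> copied verbatim over \<open>F_2\<close>.\<close>

definition wmul_res :: "2 \<times> 2 \<Rightarrow> 2 \<times> 2 \<Rightarrow> 2 \<times> 2" where
  "wmul_res p q = (case p of (a, b) \<Rightarrow> case q of (c, d) \<Rightarrow> (a*c + b*d, a*d + b*c + b*d))"

definition wsig_res :: "2 \<times> 2 \<Rightarrow> 2 \<times> 2" where
  "wsig_res p = (case p of (a, b) \<Rightarrow> (a + b, - b))"

definition mult_res :: "2 \<times> 2 \<times> 2 \<times> 2 \<Rightarrow> 2 \<times> 2 \<times> 2 \<times> 2 \<Rightarrow> 2 \<times> 2 \<times> 2 \<times> 2" where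
  "mult_res x y = (case x of (xa, xb, xc, xd) \<Rightarrow> case y of (ya, yb, yc, yd) \<Rightarrow>
     (let p = wmul_res (xa, xb) (ya, yb); q = wmul_res (wsig_res (xc, xd)) (yc, yd);
          u = wmul_res (wsig_res (xa, xb)) (yc, yd); v = wmul_res (xc, xd) (ya, yb)
      in (fst p + 2 * fst q, snd p + 2 * snd q, fst u + fst v, snd u + snd v)))"

definition add_res :: "2 \<times> 2 \<times> 2 \<times> 2 \<Rightarrow> 2 \<times> 2 \<times> 2 \<times> 2 \<Rightarrow> 2 \<times> 2 \<times> 2 \<times> 2" where
  "add_res x y = (case x of (xa, xb, xc, xd) \<Rightarrow> case y of (ya, yb, yc, yd) \<Rightarrow>
     (xa + ya, xb + yb, xc + yc, xd + yd))"

definition conj_res :: "2 \<times> 2 \<times> 2 \<times> 2 \<Rightarrow> 2 \<times> 2 \<times> 2 \<times> 2" where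
  "conj_res x = (case x of (xa, xb, xc, xd) \<Rightarrow> (xa + xb, - xb, - xc, - xd))"

definition res_OD :: "OD \<Rightarrow> 2 \<times> 2 \<times> 2 \<times> 2" where
  "res_OD x = (res2 (c1 x), res2 (cw x), res2 (ci x), res2 (ciw x))"

lemma res_OD_mult: "res_OD (x * y) = mult_res (res_OD x) (res_OD y)"
  by (simp only: res_OD_def mult_res_def times_OD_def wmul_def wmul_res_def wsig_def wsig_res_def
      Let_def OD.sel prod.case fst_conv snd_conv res2_add res2_mult res2_uminus res2_numeral)

lemma res_OD_add: "res_OD (x + y) = add_res (res_OD x) (res_OD y)"
  by (simp add: res_OD_def add_res_def plus_OD_def)

lemma res_OD_qconj: "res_OD (qconj x) = conj_res (res_OD x)"
  by (simp add: res_OD_def conj_res_def qconj_def)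

lemma res_OD_scal: "res_OD (scal a) = (res2 a, 0, 0, 0)"
  by (simp add: res_OD_def scal_def)

lemma mult_res_zero_left: "mult_res (0, 0, 0, 0) y = (0, 0, 0, 0)"
  by (simp add: mult_res_def wmul_res_def wsig_res_def Let_def split: prod.splits)

lemma add_res_zero_right: "add_res x (0, 0, 0, 0) = x"
  by (simp add: add_res_def split: prod.splits)

lemma res_OD_j_plus_ij: "res_OD (qj + qi * qj) = (1, 0, 1, 0)"
  by (simp add: res_OD_mult res_OD_add)
     (simp add: res_OD_def qi_def qj_def mult_res_def wmul_res_def wsig_res_def add_res_def)

lemma res_OD_i_plus_j: "res_OD (qi + qj) = (1, 0, 1, 0)"
  by (simp add: res_OD_add) (simp add: res_OD_def qi_def qj_def add_res_def)

lemma mult_res_fixes_one_plus_i_imp: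
  assumes "mult_res (mult_res (a, b, c, d) (1, 0, 1, 0)) (conj_res (a, b, c, d)) = (1, 0, 1, 0)"
  shows "a = 1 \<and> b = 0"
proof -
  have "\<forall>a b c d. mult_res (mult_res (a, b, c, d) (1, 0, 1, 0)) (conj_res (a, b, c, d)) = (1, 0, 1, 0)
          \<longrightarrow> a = 1 \<and> b = (0::2)"
    unfolding all_mod_2 by (simp add: mult_res_def wmul_res_def wsig_res_def conj_res_def Let_def)
  with assms show ?thesis by blast
qed

lemma one_minus_mem_qi_OD:
  assumes "res2 (c1 r) = 1" and "res2 (cw r) = 0"
  shows "\<exists>s. 1 - r = qi * s"
proof -
  obtain a where a: "1 - c1 r = 2 * a"
    using res2_eq_0_imp_even[of "1 - c1 r"] assms(1) by auto
  obtain b where b: "- cw r = 2 * b"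
    using res2_eq_0_imp_even[of "- cw r"] assms(2) by auto
  have "1 - r = qi * OD (- ci r) (- ciw r) a b"
    using a b by (simp add: times_OD_def minus_OD_def one_OD_def qi_def wmul_def wsig_def Let_def)
  then show ?thesis by blast
qed

lemma one_minus_mem_qi_OD_if_fixes_mod_2:
  fixes c :: padic2 and lam r T :: OD
  assumes "res2 c = 0" and "res_OD T = (1, 0, 1, 0)"
    and "T = r * T * qconj r + scal c * lam * T * qconj lam"
  shows "\<exists>s. 1 - r = qi * s"
proof -
  have "res_OD T = res_OD (r * T * qconj r + scal c * lam * T * qconj lam)"
    using assms(3) by (rule arg_cong)
  then have "mult_res (mult_res (res_OD r) (1, 0, 1, 0)) (conj_res (res_OD r)) = (1, 0, 1, 0)"
    by (simp only: res_OD_add res_OD_mult res_OD_qconj res_OD_scal assms(1,2)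
        mult_res_zero_left add_res_zero_right)
  then have "res2 (c1 r) = 1 \<and> res2 (cw r) = 0"
    unfolding res_OD_def by (rule mult_res_fixes_one_plus_i_imp)
  then show ?thesis by (blast intro: one_minus_mem_qi_OD)
qed

theorem lemma5p5:
  fixes eps :: padic2 and lam r :: OD and t :: nat
  assumes "unit2 eps" and "t \<ge> 2"
    and "qj + qi * qj = r * (qj + qi * qj) * qconj r
           + scal (eps * 2 ^ t) * lam * (qj + qi * qj) * qconj lam
         \<or> qi + qj = r * (qi + qj) * qconj r
           + scal (eps * 2 ^ t) * lam * (qi + qj) * qconj lam"
  shows "\<exists>s :: OD. 1 - r = qi * s"
proof -
  have c: "res2 (eps * 2 ^ t) = 0"
    using assms(2) by (simp add: power_0_left)
  from assms(3) show ?thesis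
  proof
    assume "qj + qi * qj = r * (qj + qi * qj) * qconj r
              + scal (eps * 2 ^ t) * lam * (qj + qi * qj) * qconj lam"
    with c show ?thesis by (rule one_minus_mem_qi_OD_if_fixes_mod_2[OF _ res_OD_j_plus_ij])
  next
    assume "qi + qj = r * (qi + qj) * qconj r + scal (eps * 2 ^ t) * lam * (qi + qj) * qconj lam"
    with c show ?thesis by (rule one_minus_mem_qi_OD_if_fixes_mod_2[OF _ res_OD_i_plus_j])
  qed
qed

end
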